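(* Let $b\in\mathcal B$ and let $R$ be the multiset of zeros in $\mathbb C^*$ of the Laurent polynomial $1-bb^*$. Then: (a) $\pi_2^{-1}(b)\subseteq\mathcal S$ is finite and $|\pi_2^{-1}(b)|=\mathcal N(R)$; (b) if $(a,b),(a',b)\in\pi_2^{-1}(b)$, then $a\ne a'$ if and only if the multisets of zeros of $a^*$ and $(a')^*$ differ; moreover $a$ and $a'$ have the same zeros on $\mathbb T$ counted with multiplicity; (c) if $a$ is a polynomial with $a(0)\ne0$ and zero multiset $R_a$, then $(a^*,b)\in\pi_2^{-1}(b)$ implies $R=\bigcup_{\alpha\in R_a}\{\alpha,1/\overline\alpha\}$ as multisets; conversely, if $R=\bigcup_{\alpha\in R_a}\{\alpha,1/\overline\alpha\}$ then there is a unique $\lambda\in\mathbb C^*$ with $(\lambda a^*,b)\in\pi_2^{-1}(b)$.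
   Context: $\mathbb T$ is the unit circle, $\mathbb C^*=\mathbb C\setminus\{0\}$, $a^*(z):=\overline{a(1/\overline z)}$ for a Laurent polynomial $a$. $\mathcal S$ is the set of pairs $(a,b)$ of Laurent polynomials with $aa^*+bb^*=1$ and $0<a^*(0)<\infty$; $\pi_1(a,b)=a$, $\pi_2(a,b)=b$, $\mathcal A:=\pi_1(\mathcal S)$, $\mathcal B:=\pi_2(\mathcal S)$. Multiset unions add multiplicities. Counting function: for a finite multiset $R\subset\mathbb C^*$, define $\alpha\sim\beta$ iff $\alpha=\beta$ or $\alpha=1/\overline\beta$ (equivalence classes taken as multisets, all of even size in the cases considered); for a class $y$ let $\sharp(y):=1$ if $y$ meets $\mathbb T$ and $\sharp(y):=1+|y|/2$ otherwise; $\mathcal N(R):=\prod_{y\in R/\sim}\sharp(y)$. *)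

theory Defs
  imports "HOL-Analysis.Analysis" "HOL-Computational_Algebra.Polynomial" "HOL-Library.Multiset"
begin

text \<open>Laurent polynomials over the complex numbers are represented by their coefficient
  functions c :: int => complex (the Laurent polynomial is the sum of c n * z powi n),
  required to have finite support.\<close>

type_synonym laurent = "int \<Rightarrow> complex"

definition lsupp :: "laurent \<Rightarrow> int set" where
  "lsupp f = {n. f n \<noteq> 0}"

definition is_laurent :: "laurent \<Rightarrow> bool" where
  "is_laurent f \<longleftrightarrow> finite (lsupp f)"

definition leval :: "laurent \<Rightarrow> complex \<Rightarrow> complex" where
  "leval f z = (\<Sum>n\<in>lsupp f. f n * z powi n)"

definition lone :: laurent where
  "lone n = (if n = 0 then 1 else 0)"

definition lmult :: "laurent \<Rightarrow> laurent \<Rightarrow> laurent" where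
  "lmult f g n = (\<Sum>k\<in>lsupp f. f k * g (n - k))"

text \<open>a^*(z) = conj (a (1 / conj z)):  if a = sum a_n z^n then a^* = sum conj(a_n) z^(-n).\<close>
definition lstar :: "laurent \<Rightarrow> laurent" where
  "lstar f n = cnj (f (- n))"

text \<open>0 < f(0) < infinity: f has no negative powers (so f(0) is finite and equals the
  constant coefficient) and the constant coefficient is a positive real.\<close>
definition val0_pos :: "laurent \<Rightarrow> bool" where
  "val0_pos f \<longleftrightarrow> (\<forall>n<0. f n = 0) \<and> f 0 \<in> \<real> \<and> 0 < Re (f 0)"

definition SS :: "(laurent \<times> laurent) set" where
  "SS = {(a, b). is_laurent a \<and> is_laurent b \<and>
                 (\<lambda>n. lmult a (lstar a) n + lmult b (lstar b) n) = lone \<and>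
                 val0_pos (lstar a)}"

definition BB :: "laurent set" where
  "BB = snd ` SS"

definition fibre2 :: "laurent \<Rightarrow> (laurent \<times> laurent) set" where
  "fibre2 b = {p \<in> SS. snd p = b}"

text \<open>Zeros in C* of a Laurent polynomial f = z^m p(z) (p(0) /= 0), counted with
  multiplicity: the roots of the polynomial p.\<close>
definition ldeg :: "laurent \<Rightarrow> int" where
  "ldeg f = Min (lsupp f)"

definition hdeg :: "laurent \<Rightarrow> int" where
  "hdeg f = Max (lsupp f)"

definition lpoly :: "laurent \<Rightarrow> complex poly" where
  "lpoly f = (if lsupp f = {} then 0 else
     Poly (map (\<lambda>i. f (ldeg f + int i)) [0..<nat (hdeg f - ldeg f) + 1]))"

definition lzeros :: "laurent \<Rightarrow> complex multiset" where
  "lzeros f = filter_mset (\<lambda>z. z \<noteq> 0) (proots (lpoly f))"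

definition poly_to_laurent :: "complex poly \<Rightarrow> laurent" where
  "poly_to_laurent p n = (if 0 \<le> n then coeff p (nat n) else 0)"

definition lsmult :: "complex \<Rightarrow> laurent \<Rightarrow> laurent" where
  "lsmult c f n = c * f n"

definition lminus :: "laurent \<Rightarrow> laurent \<Rightarrow> laurent" where
  "lminus f g n = f n - g n"

text \<open>The class of alpha under alpha ~ beta iff alpha = beta or
  alpha = 1/conj beta has underlying set {alpha, 1/conj alpha}; its size (as a multiset)
  is the sum of the multiplicities in R of its distinct elements.\<close>
definition rclass :: "complex \<Rightarrow> complex set" where
  "rclass \<alpha> = {\<alpha>, 1 / cnj \<alpha>}"

definition class_size :: "complex multiset \<Rightarrow> complex set \<Rightarrow> nat" where
  "class_size R y = (\<Sum>x\<in>y. count R x)"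

definition sharp :: "complex multiset \<Rightarrow> complex set \<Rightarrow> nat" where
  "sharp R y = (if (\<exists>x\<in>y. cmod x = 1) then 1 else 1 + class_size R y div 2)"

definition NN :: "complex multiset \<Rightarrow> nat" where
  "NN R = (\<Prod>y\<in>rclass ` set_mset R. sharp R y)"

end

theory Submission
  imports Defs "HOL-Computational_Algebra.Fundamental_Theorem_Algebra"
begin

(* The fibre over b is parametrised by polynomials.  If (a, b) is in S then a^* is a polynomial P
   with P(0) > 0, and a a^* = 1 - b b^* reads z^(-deg P) P^#(z) P(z) = 1 - b b^*, where
   P^#(z) = z^(deg P) conj (P (1 / conj z)) is the reciprocal polynomial; its zeros are the
   reflections 1 / conj alpha of the zeros alpha of P.  Fixing one solution P0 and M = P0^# P0, the
   fibre is in bijection with the polynomials P with P^# P = M and P(0) > 0, and taking zeros maps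
   these bijectively onto the multisets S with sigma(S) + S = zeros(M), sigma z = 1 / conj z:
   any F with zeros S satisfies M = kappa F^# F with kappa > 0 (compare the middle coefficients,
   which are sums of squared moduli), so exactly one rescaling of F solves P^# P = M, P(0) > 0.
   Counting such S orbit by orbit of sigma gives N(R): the multiplicity in S of a zero alpha off the
   circle is free in 0..m, where m is its multiplicity in R, and is forced to be m/2 on the circle. *)

section \<open>Halves of a multiset under an involution\<close>

definition halves :: "('a \<Rightarrow> 'a) \<Rightarrow> 'a multiset \<Rightarrow> 'a multiset set" where
  "halves \<sigma> R = {S. image_mset \<sigma> S + S = R}"

definition inv_orbit :: "('a \<Rightarrow> 'a) \<Rightarrow> 'a \<Rightarrow> 'a set" where
  "inv_orbit \<sigma> x = {x, \<sigma> x}"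

definition orbit_rep :: "'a set \<Rightarrow> 'a" where
  "orbit_rep y = (SOME x. x \<in> y)"

text \<open>For \<open>S \<in> halves \<sigma> R\<close>, the multiplicity in \<open>S\<close> of the representative of an orbit determines
  \<open>S\<close> on that orbit; it is half its multiplicity in \<open>R\<close> at a fixed point of \<open>\<sigma>\<close>, and any value up
  to that multiplicity otherwise.\<close>

definition rep_count_range :: "('a \<Rightarrow> 'a) \<Rightarrow> 'a multiset \<Rightarrow> 'a set \<Rightarrow> nat set" where
  "rep_count_range \<sigma> R y =
     (if \<sigma> (orbit_rep y) = orbit_rep y then {count R (orbit_rep y) div 2} else {..count R (orbit_rep y)})"

context
  fixes \<sigma> :: "'a \<Rightarrow> 'a"
  assumes involution: "\<And>x. \<sigma> (\<sigma> x) = x"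
begin

lemma count_image_mset_involution: "count (image_mset \<sigma> S) x = count S (\<sigma> x)"
proof -
  have "\<sigma> -` {x} = {\<sigma> x}"
    using involution by auto
  then show ?thesis
    by (cases "\<sigma> x \<in># S") (simp_all add: count_image_mset not_in_iff)
qed

lemma mem_halves_iff: "S \<in> halves \<sigma> R \<longleftrightarrow> (\<forall>x. count S (\<sigma> x) + count S x = count R x)"
  by (simp add: halves_def multiset_eq_iff count_image_mset_involution)

lemma inv_orbit_involution [simp]: "inv_orbit \<sigma> (\<sigma> x) = inv_orbit \<sigma> x"
  by (auto simp: inv_orbit_def involution)

lemma orbit_rep_inv_orbit: "orbit_rep (inv_orbit \<sigma> x) = x \<or> orbit_rep (inv_orbit \<sigma> x) = \<sigma> x"
proof -
  have "orbit_rep (inv_orbit \<sigma> x) \<in> inv_orbit \<sigma> x"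
    unfolding orbit_rep_def by (rule someI[of _ x]) (simp add: inv_orbit_def)
  then show ?thesis by (simp add: inv_orbit_def)
qed

lemma inv_orbit_orbit_rep [simp]: "inv_orbit \<sigma> (orbit_rep (inv_orbit \<sigma> x)) = inv_orbit \<sigma> x"
  using orbit_rep_inv_orbit[of x] by auto

context
  fixes R :: "'a multiset" and S0 :: "'a multiset"
  assumes S0: "S0 \<in> halves \<sigma> R"
begin

lemma count_involution_if_halves: "count R (\<sigma> x) = count R x"
  using S0 mem_halves_iff[of S0 R] involution by (metis add.commute)

lemma mem_involution_if_halves: "\<sigma> x \<in># R \<longleftrightarrow> x \<in># R"
  using count_involution_if_halves[of x] by (metis count_eq_zero_iff)

lemma count_fixed_point_if_halves: "\<sigma> x = x \<Longrightarrow> count R x div 2 + count R x div 2 = count R x"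
  using S0 mem_halves_iff[of S0 R] by (metis add_self_div_2)

lemma count_orbit_rep_in_range:
  assumes "S \<in> halves \<sigma> R"
  shows "count S (orbit_rep y) \<in> rep_count_range \<sigma> R y"
  using assms unfolding rep_count_range_def mem_halves_iff
  by (smt (verit) atMost_iff le_add2 mult_2 nonzero_mult_div_cancel_left singletonI zero_neq_numeral)

lemma halves_eqI:
  assumes S: "S \<in> halves \<sigma> R" and S': "S' \<in> halves \<sigma> R"
    and eq: "\<And>x. x \<in># R \<Longrightarrow> count S (orbit_rep (inv_orbit \<sigma> x)) = count S' (orbit_rep (inv_orbit \<sigma> x))"
  shows "S = S'"
proof (rule multiset_eqI)
  fix x
  have S_x: "count S (\<sigma> x) + count S x = count R x" and S'_x: "count S' (\<sigma> x) + count S' x = count R x"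
    using S S' by (simp_all add: mem_halves_iff)
  show "count S x = count S' x"
  proof (cases "x \<in># R")
    case False
    then show ?thesis using S_x S'_x by (simp add: not_in_iff)
  next
    case True
    then show ?thesis
      using orbit_rep_inv_orbit[of x] eq[OF True] S_x S'_x by auto
  qed
qed

lemma halves_with_orbit_rep_counts:
  assumes f: "f \<in> (\<Pi>\<^sub>E y\<in>inv_orbit \<sigma> ` set_mset R. rep_count_range \<sigma> R y)"
  obtains S where "S \<in> halves \<sigma> R" "\<And>x. x \<in># R \<Longrightarrow> count S (orbit_rep (inv_orbit \<sigma> x)) = f (inv_orbit \<sigma> x)"
proof -
  define g where "g x = (if x \<in># R then if orbit_rep (inv_orbit \<sigma> x) = x then f (inv_orbit \<sigma> x)
    else count R x - f (inv_orbit \<sigma> x) else 0)" for x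
  have "finite {x. g x > 0}"
    by (rule finite_subset[of _ "set_mset R"]) (auto simp: g_def split: if_splits)
  then have count_S: "count (Abs_multiset g) = g"
    by (rule count_Abs_multiset)
  have "g (\<sigma> x) + g x = count R x" for x
  proof (cases "x \<in># R")
    case False
    moreover have "\<sigma> x \<notin># R" "count R x = 0"
      using False mem_involution_if_halves by (simp_all add: not_in_iff)
    ultimately show ?thesis by (simp add: g_def)
  next
    case True
    have in_R: "\<sigma> x \<in># R"
      using True mem_involution_if_halves by simp
    have f_x: "f (inv_orbit \<sigma> x) \<in> rep_count_range \<sigma> R (inv_orbit \<sigma> x)"
      using True by (intro PiE_mem[OF f]) simp
    consider "\<sigma> x = x" | "\<sigma> x \<noteq> x" "orbit_rep (inv_orbit \<sigma> x) = x"
      | "\<sigma> x \<noteq> x" "orbit_rep (inv_orbit \<sigma> x) = \<sigma> x"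
      using orbit_rep_inv_orbit[of x] by blast
    then show ?thesis
    proof cases
      case 1
      then have "orbit_rep (inv_orbit \<sigma> x) = x"
        using orbit_rep_inv_orbit[of x] by auto
      then show ?thesis
        using 1 True f_x count_fixed_point_if_halves[of x]
        by (simp add: g_def rep_count_range_def)
    next
      case 2
      then show ?thesis
        using True in_R f_x count_involution_if_halves[of x]
        by (simp add: g_def rep_count_range_def)
    next
      case 3
      then show ?thesis
        using True in_R f_x count_involution_if_halves[of x] involution[of x]
        by (simp add: g_def rep_count_range_def)
    qed
  qed
  then have "Abs_multiset g \<in> halves \<sigma> R"
    by (simp add: mem_halves_iff count_S)
  moreover have "count (Abs_multiset g) (orbit_rep (inv_orbit \<sigma> x)) = f (inv_orbit \<sigma> x)" if "x \<in># R" for x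
  proof -
    have "orbit_rep (inv_orbit \<sigma> x) \<in># R"
      using orbit_rep_inv_orbit[of x] that mem_involution_if_halves[of x] by metis
    then show ?thesis
      by (simp add: count_S g_def)
  qed
  ultimately show thesis by (rule that)
qed

lemma bij_betw_halves_rep_counts:
  "bij_betw (\<lambda>S. restrict (\<lambda>y. count S (orbit_rep y)) (inv_orbit \<sigma> ` set_mset R))
     (halves \<sigma> R) (\<Pi>\<^sub>E y\<in>inv_orbit \<sigma> ` set_mset R. rep_count_range \<sigma> R y)"
  (is "bij_betw ?\<Phi> _ _")
proof (rule bij_betwI')
  show "?\<Phi> S = ?\<Phi> S' \<longleftrightarrow> S = S'" if "S \<in> halves \<sigma> R" "S' \<in> halves \<sigma> R" for S S'
  proof
    assume eq: "?\<Phi> S = ?\<Phi> S'"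
    show "S = S'"
    proof (rule halves_eqI[OF that])
      show "count S (orbit_rep (inv_orbit \<sigma> x)) = count S' (orbit_rep (inv_orbit \<sigma> x))" if "x \<in># R" for x
        using fun_cong[OF eq, of "inv_orbit \<sigma> x"] that by simp
    qed
  qed (simp only:)
  show "?\<Phi> S \<in> (\<Pi>\<^sub>E y\<in>inv_orbit \<sigma> ` set_mset R. rep_count_range \<sigma> R y)" if "S \<in> halves \<sigma> R" for S
    using count_orbit_rep_in_range[OF that] by simp
  show "\<exists>S\<in>halves \<sigma> R. f = ?\<Phi> S"
    if f: "f \<in> (\<Pi>\<^sub>E y\<in>inv_orbit \<sigma> ` set_mset R. rep_count_range \<sigma> R y)" for f
  proof -
    obtain S where "S \<in> halves \<sigma> R"
      "\<And>x. x \<in># R \<Longrightarrow> count S (orbit_rep (inv_orbit \<sigma> x)) = f (inv_orbit \<sigma> x)"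
      using halves_with_orbit_rep_counts[OF f] by blast
    moreover have "f = ?\<Phi> S"
      using f calculation(2) by (auto simp: PiE_iff extensional_def fun_eq_iff)
    ultimately show ?thesis by blast
  qed
qed

lemma card_rep_count_range:
  assumes "y \<in> inv_orbit \<sigma> ` set_mset R"
  shows "card (rep_count_range \<sigma> R y) =
    (if \<exists>x\<in>y. \<sigma> x = x then 1 else 1 + (\<Sum>x\<in>y. count R x) div 2)"
proof -
  define x where "x = orbit_rep y"
  from assms obtain x0 where "y = inv_orbit \<sigma> x0" by blast
  then have "y = inv_orbit \<sigma> x"
    by (simp add: x_def)
  then have y: "y = {x, \<sigma> x}"
    by (simp add: inv_orbit_def)
  show ?thesis
  proof (cases "\<sigma> x = x")
    case True
    then show ?thesis
      unfolding rep_count_range_def x_def[symmetric] using y by simp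
  next
    case False
    then have "\<sigma> (\<sigma> x) \<noteq> \<sigma> x" using involution by simp
    then show ?thesis
      unfolding rep_count_range_def x_def[symmetric]
      using False y count_involution_if_halves[of x] by simp
  qed
qed

lemma card_halves:
  "finite (halves \<sigma> R) \<and>
   card (halves \<sigma> R) = (\<Prod>y\<in>inv_orbit \<sigma> ` set_mset R.
     if \<exists>x\<in>y. \<sigma> x = x then 1 else 1 + (\<Sum>x\<in>y. count R x) div 2)"
proof -
  let ?Y = "inv_orbit \<sigma> ` set_mset R" and ?C = "rep_count_range \<sigma> R"
  have "finite (\<Pi>\<^sub>E y\<in>?Y. ?C y)"
    by (intro finite_PiE) (auto simp: rep_count_range_def)
  then have fin: "finite (halves \<sigma> R)"
    using bij_betw_finite[OF bij_betw_halves_rep_counts] by simp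
  have "card (halves \<sigma> R) = (\<Prod>y\<in>?Y. card (?C y))"
    using bij_betw_same_card[OF bij_betw_halves_rep_counts] by (simp add: card_PiE)
  also have "\<dots> = (\<Prod>y\<in>?Y. if \<exists>x\<in>y. \<sigma> x = x then 1 else 1 + (\<Sum>x\<in>y. count R x) div 2)"
    by (rule prod.cong[OF refl card_rep_count_range])
  finally show ?thesis
    using fin by blast
qed

end

end

section \<open>Reflection in the unit circle\<close>

definition circle_reflect :: "complex \<Rightarrow> complex" where
  "circle_reflect z = 1 / cnj z"

lemma circle_reflect_circle_reflect [simp]: "circle_reflect (circle_reflect z) = z"
  by (simp add: circle_reflect_def)

lemma circle_reflect_eq_self_iff:
  assumes "z \<noteq> 0"
  shows "circle_reflect z = z \<longleftrightarrow> cmod z = 1"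
proof -
  have "circle_reflect z = z \<longleftrightarrow> z * cnj z = 1"
    using assms by (auto simp: circle_reflect_def field_simps)
  also have "\<dots> \<longleftrightarrow> (cmod z)\<^sup>2 = 1"
    by (metis complex_norm_square of_real_1 of_real_eq_iff)
  also have "\<dots> \<longleftrightarrow> cmod z = 1"
    using norm_ge_zero[of z] unfolding power2_eq_1_iff by linarith
  finally show ?thesis .
qed

lemma norm_circle_reflect: "cmod (circle_reflect z) = 1 / cmod z"
  unfolding circle_reflect_def norm_divide complex_mod_cnj norm_one ..

lemma norm_circle_reflect_eq_1_iff [simp]: "cmod (circle_reflect z) = 1 \<longleftrightarrow> cmod z = 1"
  unfolding norm_circle_reflect by (auto simp: divide_eq_1_iff)

lemma filter_unit_circle_image_circle_reflect:
  "filter_mset (\<lambda>z. cmod z = 1) (image_mset circle_reflect S) = filter_mset (\<lambda>z. cmod z = 1) S"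
proof -
  have "filter_mset (\<lambda>z. cmod z = 1) (image_mset circle_reflect S) =
      image_mset circle_reflect (filter_mset (\<lambda>z. cmod z = 1) S)"
    by (simp add: filter_mset_image_mset)
  also have "\<dots> = image_mset id (filter_mset (\<lambda>z. cmod z = 1) S)"
  proof (rule image_mset_cong)
    fix z assume "z \<in># filter_mset (\<lambda>z. cmod z = 1) S"
    then have "cmod z = 1" "z \<noteq> 0" by auto
    then show "circle_reflect z = id z" by (simp add: circle_reflect_eq_self_iff)
  qed
  finally show ?thesis by simp
qed

lemma sum_mset_reflection_pairs:
  "(\<Sum>\<alpha>\<in>#S. {#\<alpha>, 1 / cnj \<alpha>#}) = image_mset circle_reflect S + S"
  by (induction S) (auto simp: circle_reflect_def)

lemma NN_eq_card_halves:
  assumes "0 \<notin># R" "S0 \<in> halves circle_reflect R"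
  shows "finite (halves circle_reflect R) \<and> card (halves circle_reflect R) = NN R"
proof -
  have rclass_eq: "rclass = inv_orbit circle_reflect"
    by (simp add: fun_eq_iff rclass_def inv_orbit_def circle_reflect_def)
  have sharp_eq: "sharp R y =
      (if \<exists>x\<in>y. circle_reflect x = x then 1 else 1 + (\<Sum>x\<in>y. count R x) div 2)"
    if y: "y \<in> inv_orbit circle_reflect ` set_mset R" for y
  proof -
    obtain x where x: "x \<in># R" "y = {x, circle_reflect x}"
      using y by (auto simp: inv_orbit_def)
    then have "x \<noteq> 0"
      using assms(1) by auto
    show ?thesis
    proof (cases "cmod x = 1")
      case True
      then show ?thesis
        using x(2) \<open>x \<noteq> 0\<close> by (simp add: sharp_def circle_reflect_eq_self_iff)
    next
      case False
      then have "circle_reflect x \<noteq> x"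
        using circle_reflect_eq_self_iff[OF \<open>x \<noteq> 0\<close>] by simp
      then show ?thesis
        using False x(2) by (auto simp: sharp_def class_size_def)
    qed
  qed
  have "NN R = (\<Prod>y\<in>inv_orbit circle_reflect ` set_mset R.
      if \<exists>x\<in>y. circle_reflect x = x then 1 else 1 + (\<Sum>x\<in>y. count R x) div 2)"
    unfolding NN_def rclass_eq by (rule prod.cong[OF refl sharp_eq])
  then show ?thesis
    using card_halves[of circle_reflect, OF circle_reflect_circle_reflect assms(2)] by (simp only:)
qed

section \<open>Reciprocal polynomials\<close>

text \<open>\<open>reciprocal_poly P\<close> is \<open>z\<^sup>n conj (P (1 / conj z))\<close> with \<open>n = degree P\<close>.\<close>

definition reciprocal_poly :: "complex poly \<Rightarrow> complex poly" where
  "reciprocal_poly P = reflect_poly (map_poly cnj P)"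

lemma degree_map_poly_cnj [simp]: "degree (map_poly cnj P) = degree P"
  by (rule degree_map_poly) auto

lemma coeff_map_poly_cnj [simp]: "coeff (map_poly cnj P) n = cnj (coeff P n)"
  by (rule coeff_map_poly) auto

lemma map_poly_cnj_mult: "map_poly cnj (P * Q) = map_poly cnj P * map_poly cnj Q"
  by (subst poly_eq_poly_eq_iff[symmetric]) (simp add: fun_eq_iff)

lemma coeff_reciprocal_poly: "i \<le> degree P \<Longrightarrow> coeff (reciprocal_poly P) i = cnj (coeff P (degree P - i))"
  by (simp add: reciprocal_poly_def coeff_reflect_poly)

lemma coeff_0_reciprocal_poly [simp]: "coeff (reciprocal_poly P) 0 = cnj (lead_coeff P)"
  by (simp add: reciprocal_poly_def)

lemma reciprocal_poly_eq_0_iff [simp]: "reciprocal_poly P = 0 \<longleftrightarrow> P = 0"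
  by (simp add: reciprocal_poly_def map_poly_eq_0_iff)

lemma degree_reciprocal_poly: "coeff P 0 \<noteq> 0 \<Longrightarrow> degree (reciprocal_poly P) = degree P"
  by (simp add: reciprocal_poly_def)

lemma reciprocal_poly_mult: "reciprocal_poly (P * Q) = reciprocal_poly P * reciprocal_poly Q"
  by (simp add: reciprocal_poly_def map_poly_cnj_mult reflect_poly_mult)

lemma reciprocal_poly_smult: "reciprocal_poly (smult c P) = smult (cnj c) (reciprocal_poly P)"
  by (simp add: reciprocal_poly_def reflect_poly_smult map_poly_smult)

lemma reciprocal_poly_linear:
  assumes "x \<noteq> 0"
  shows "reciprocal_poly [:- x, 1:] = smult (- cnj x) [:- circle_reflect x, 1:]"
proof -
  have "reflect_poly [:- cnj x, 1:] = [:1, - cnj x:]"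
    using assms by (simp add: reflect_poly_pCons)
  also have "\<dots> = smult (- cnj x) [:- circle_reflect x, 1:]"
    using assms by (simp add: circle_reflect_def)
  finally show ?thesis
    by (simp add: reciprocal_poly_def map_poly_pCons)
qed

lemma proots_linear: "proots [:- x, 1:] = {#x#}"
  using proots_linear_factor[of "- x"] by simp

lemma zero_not_in_proots: "coeff P 0 \<noteq> 0 \<Longrightarrow> 0 \<notin># proots P"
  by (cases "P = 0") (simp_all add: poly_0_coeff_0)

lemma proots_prod_linear: "proots (\<Prod>x\<in>#S. [:- x, 1:]) = S"
proof (induction S)
  case (add x S)
  have "(\<Prod>x\<in>#S. [:- x, 1:]) \<noteq> 0"
    by (auto simp: prod_mset_zero_iff)
  then have "proots ([:- x, 1:] * (\<Prod>x\<in>#S. [:- x, 1:])) = proots [:- x, 1:] + S"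
    using add.IH by (subst proots_mult) simp_all
  then have "proots ([:- x, 1:] * (\<Prod>x\<in>#S. [:- x, 1:])) = add_mset x S"
    by (simp add: proots_linear)
  then show ?case
    by (simp only: image_mset_add_mset prod_mset.add_mset)
qed simp

lemma proots_reciprocal_poly_prod_linear:
  assumes "0 \<notin># S"
  shows "proots (reciprocal_poly (\<Prod>x\<in>#S. [:- x, 1:])) = image_mset circle_reflect S"
  using assms
proof (induction S)
  case (add x S)
  have "x \<noteq> 0" using add.prems by auto
  have "reciprocal_poly (\<Prod>x\<in>#add_mset x S. [:- x, 1:]) =
      smult (- cnj x) [:- circle_reflect x, 1:] * reciprocal_poly (\<Prod>x\<in>#S. [:- x, 1:])"
    by (simp only: image_mset_add_mset prod_mset.add_mset reciprocal_poly_mult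
        reciprocal_poly_linear[OF \<open>x \<noteq> 0\<close>])
  also have "proots \<dots> = proots (smult (- cnj x) [:- circle_reflect x, 1:]) +
      proots (reciprocal_poly (\<Prod>x\<in>#S. [:- x, 1:]))"
    using \<open>x \<noteq> 0\<close> by (intro proots_mult) (auto simp: prod_mset_zero_iff)
  also have "proots (smult (- cnj x) [:- circle_reflect x, 1:]) = {#circle_reflect x#}"
    using \<open>x \<noteq> 0\<close> proots_smult[of "- cnj x" "[:- circle_reflect x, 1:]"]
    by (simp only: proots_linear) simp
  finally show ?case
    using add by simp
qed (simp add: reciprocal_poly_def)

lemma proots_reciprocal_poly:
  assumes "coeff P 0 \<noteq> 0"
  shows "proots (reciprocal_poly P) = image_mset circle_reflect (proots P)"
proof -
  have "P \<noteq> 0" "0 \<notin># proots P"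
    using assms zero_not_in_proots by auto
  have "reciprocal_poly P = smult (cnj (lead_coeff P)) (reciprocal_poly (\<Prod>x\<in>#proots P. [:-x, 1:]))"
    by (subst complex_poly_decompose_multiset[symmetric]) (simp add: reciprocal_poly_smult)
  then show ?thesis
    using \<open>P \<noteq> 0\<close> proots_reciprocal_poly_prod_linear[OF \<open>0 \<notin># proots P\<close>] by simp
qed

lemma degree_reciprocal_poly_mult_self:
  "coeff P 0 \<noteq> 0 \<Longrightarrow> degree (reciprocal_poly P * P) = 2 * degree P"
  by (subst degree_mult_eq) (auto simp: degree_reciprocal_poly)

lemma coeff_0_reciprocal_poly_mult_self:
  "coeff P 0 \<noteq> 0 \<Longrightarrow> coeff (reciprocal_poly P * P) 0 \<noteq> 0"
  by (auto simp: coeff_mult_0)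

lemma proots_reciprocal_poly_mult_self:
  "coeff P 0 \<noteq> 0 \<Longrightarrow> proots (reciprocal_poly P * P) = image_mset circle_reflect (proots P) + proots P"
  by (subst proots_mult) (auto simp: proots_reciprocal_poly)

lemma coeff_reciprocal_poly_mult_self_degree:
  "coeff (reciprocal_poly P * P) (degree P) = of_real (\<Sum>i\<le>degree P. (cmod (coeff P i))\<^sup>2)"
proof -
  have "coeff (reciprocal_poly P * P) (degree P) =
      (\<Sum>i\<le>degree P. coeff P i * coeff (reciprocal_poly P) (degree P - i))"
    by (simp add: coeff_mult mult.commute[of "reciprocal_poly P"])
  also have "\<dots> = (\<Sum>i\<le>degree P. of_real ((cmod (coeff P i))\<^sup>2))"
    by (intro sum.cong refl) (simp only: coeff_reciprocal_poly atMost_iff diff_diff_cancel complex_norm_square)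
  finally show ?thesis by simp
qed

section \<open>Spectral factors\<close>

lemma complex_poly_eq_smult_if_proots_eq:
  fixes P Q :: "complex poly"
  assumes "P \<noteq> 0" "Q \<noteq> 0" "proots P = proots Q"
  shows "P = smult (lead_coeff P / lead_coeff Q) Q"
proof -
  have "smult (lead_coeff P / lead_coeff Q) Q =
      smult (lead_coeff P / lead_coeff Q * lead_coeff Q) (\<Prod>x\<in>#proots Q. [:-x, 1:])"
    by (subst (1) complex_poly_decompose_multiset[symmetric]) simp
  also have "\<dots> = P"
    using assms complex_poly_decompose_multiset[of P] by simp
  finally show ?thesis ..
qed

lemma reciprocal_poly_mult_self_positive_multiple:
  assumes P: "coeff P 0 \<noteq> 0" and F: "coeff F 0 \<noteq> 0"
    and eq: "proots (reciprocal_poly F * F) = proots (reciprocal_poly P * P)"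
  obtains \<kappa> :: real where "\<kappa> > 0" "reciprocal_poly P * P = smult (of_real \<kappa>) (reciprocal_poly F * F)"
proof -
  define mu where "mu Q = (\<Sum>i\<le>degree Q. (cmod (coeff Q i))\<^sup>2)" for Q :: "complex poly"
  have mu_pos: "mu Q > 0" if "Q \<noteq> 0" for Q
  proof -
    have "0 < (cmod (lead_coeff Q))\<^sup>2"
      using that by simp
    also have "\<dots> \<le> mu Q"
      unfolding mu_def by (rule member_le_sum) auto
    finally show ?thesis .
  qed
  define k where "k = lead_coeff (reciprocal_poly P * P) / lead_coeff (reciprocal_poly F * F)"
  have nz: "reciprocal_poly P * P \<noteq> 0" "reciprocal_poly F * F \<noteq> 0" "P \<noteq> 0" "F \<noteq> 0"
    using P F by auto
  then have k: "reciprocal_poly P * P = smult k (reciprocal_poly F * F)"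
    unfolding k_def using eq by (intro complex_poly_eq_smult_if_proots_eq) auto
  then have "k \<noteq> 0"
    using nz by auto
  then have "degree F = degree P"
    using arg_cong[OF k, of degree] P F by (simp add: degree_reciprocal_poly_mult_self)
  then have "of_real (mu P) = k * of_real (mu F)"
    using arg_cong[OF k, of "\<lambda>Q. coeff Q (degree P)"]
      coeff_reciprocal_poly_mult_self_degree[of P] coeff_reciprocal_poly_mult_self_degree[of F]
    by (simp only: mu_def coeff_smult)
  then have "k = of_real (mu P / mu F)"
    using mu_pos[OF nz(4)] by (simp add: field_simps)
  then show thesis
    using that[of "mu P / mu F"] k mu_pos nz by simp
qed

lemma ex1_norm_mult_pos_real:
  fixes c :: complex
  assumes "c \<noteq> 0" "r > 0"
  shows "\<exists>!d. cmod d = r \<and> d * c \<in> \<real> \<and> 0 < Re (d * c)"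
proof (rule ex1I)
  define d0 where "d0 = of_real (r * cmod c) / c"
  show "cmod d0 = r \<and> d0 * c \<in> \<real> \<and> 0 < Re (d0 * c)"
    using assms by (simp add: d0_def norm_divide norm_mult)
  show "d = d0" if d: "cmod d = r \<and> d * c \<in> \<real> \<and> 0 < Re (d * c)" for d
  proof -
    obtain t where t: "d * c = of_real t"
      using d by (auto elim: Reals_cases)
    then have "t = cmod (d * c)"
      using d by simp
    also have "\<dots> = r * cmod c"
      using d by (simp add: norm_mult)
    finally show ?thesis
      using t assms by (simp add: d0_def field_simps)
  qed
qed

definition spectral_factors :: "complex poly \<Rightarrow> complex poly set" where
  "spectral_factors M = {P. coeff P 0 \<in> \<real> \<and> 0 < Re (coeff P 0) \<and> reciprocal_poly P * P = M}"

lemma spectral_factors_coeff_0: "P \<in> spectral_factors M \<Longrightarrow> coeff P 0 \<noteq> 0"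
  by (auto simp: spectral_factors_def)

lemma proots_spectral_factor:
  "P \<in> spectral_factors M \<Longrightarrow> proots P \<in> halves circle_reflect (proots M)"
  using spectral_factors_coeff_0[of P M]
  by (auto simp: spectral_factors_def halves_def proots_reciprocal_poly_mult_self)

lemma spectral_factors_filter_unit_circle_eq:
  assumes "P \<in> spectral_factors M" "P' \<in> spectral_factors M"
  shows "filter_mset (\<lambda>z. cmod z = 1) (proots P) = filter_mset (\<lambda>z. cmod z = 1) (proots P')"
proof -
  have "filter_mset (\<lambda>z. cmod z = 1) (proots M) = filter_mset (\<lambda>z. cmod z = 1) (proots Q) +
      filter_mset (\<lambda>z. cmod z = 1) (proots Q)" if "Q \<in> spectral_factors M" for Q
  proof -
    have "proots M = image_mset circle_reflect (proots Q) + proots Q"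
      using proots_spectral_factor[OF that] by (simp add: halves_def)
    then show ?thesis
      by (simp add: filter_unit_circle_image_circle_reflect)
  qed
  then have "filter_mset (\<lambda>z. cmod z = 1) (proots P) + filter_mset (\<lambda>z. cmod z = 1) (proots P) =
      filter_mset (\<lambda>z. cmod z = 1) (proots P') + filter_mset (\<lambda>z. cmod z = 1) (proots P')"
    using assms by metis
  then show ?thesis
    by (metis count_union multiset_eqI add_self_div_2)
qed

lemma ex1_smult_spectral_factor:
  assumes P0: "coeff P0 0 \<noteq> 0" and F: "coeff F 0 \<noteq> 0"
    and halves: "proots F \<in> halves circle_reflect (proots (reciprocal_poly P0 * P0))"
  shows "\<exists>!d. smult d F \<in> spectral_factors (reciprocal_poly P0 * P0)"
proof -
  let ?F = "reciprocal_poly F * F"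
  have "proots ?F = proots (reciprocal_poly P0 * P0)"
    using halves F by (simp add: halves_def proots_reciprocal_poly_mult_self)
  then obtain \<kappa> :: real where "\<kappa> > 0" and \<kappa>: "reciprocal_poly P0 * P0 = smult (of_real \<kappa>) ?F"
    using reciprocal_poly_mult_self_positive_multiple[OF P0 F] by blast
  have "?F \<noteq> 0"
    using F by auto
  have rec_smult: "reciprocal_poly (smult d F) * smult d F = smult (of_real ((cmod d)\<^sup>2)) ?F" for d
    unfolding complex_norm_square by (simp add: reciprocal_poly_smult mult_ac)
  have smult_iff: "smult a ?F = smult b ?F \<longleftrightarrow> a = b" for a b
    using \<open>?F \<noteq> 0\<close> smult_eq_0_iff[of "a - b" ?F] by (auto simp: smult_diff_left)
  have sq_iff: "(cmod d)\<^sup>2 = \<kappa> \<longleftrightarrow> cmod d = sqrt \<kappa>" for d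
  proof
    assume "(cmod d)\<^sup>2 = \<kappa>"
    then show "cmod d = sqrt \<kappa>"
      using real_sqrt_unique[of "cmod d" \<kappa>] by simp
  next
    assume "cmod d = sqrt \<kappa>"
    then show "(cmod d)\<^sup>2 = \<kappa>"
      using \<open>\<kappa> > 0\<close> by simp
  qed
  have "smult d F \<in> spectral_factors (reciprocal_poly P0 * P0) \<longleftrightarrow>
      cmod d = sqrt \<kappa> \<and> d * coeff F 0 \<in> \<real> \<and> 0 < Re (d * coeff F 0)" for d
    unfolding spectral_factors_def mem_Collect_eq coeff_smult rec_smult \<kappa> smult_iff of_real_eq_iff sq_iff
    by blast
  then show ?thesis
    using ex1_norm_mult_pos_real[OF F] \<open>\<kappa> > 0\<close> by simp
qed

lemma bij_betw_proots_spectral_factors: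
  assumes P0: "coeff P0 0 \<noteq> 0"
  defines "M \<equiv> reciprocal_poly P0 * P0"
  shows "bij_betw proots (spectral_factors M) (halves circle_reflect (proots M))"
proof (rule bij_betwI')
  show "proots P = proots P' \<longleftrightarrow> P = P'" if "P \<in> spectral_factors M" "P' \<in> spectral_factors M" for P P'
  proof
    assume eq: "proots P = proots P'"
    have P: "coeff P 0 \<noteq> 0" and P': "coeff P' 0 \<noteq> 0"
      using that by (simp_all add: spectral_factors_coeff_0)
    then have P'_eq: "P' = smult (lead_coeff P' / lead_coeff P) P"
      using eq by (intro complex_poly_eq_smult_if_proots_eq) auto
    have "\<exists>!d. smult d P \<in> spectral_factors M"
      unfolding M_def using P0 P proots_spectral_factor[OF that(1)]
      by (intro ex1_smult_spectral_factor) (simp_all add: M_def)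
    moreover have "smult 1 P \<in> spectral_factors M" "smult (lead_coeff P' / lead_coeff P) P \<in> spectral_factors M"
      using that P'_eq by simp_all
    ultimately show "P = P'"
      using P'_eq by (metis smult_1_left)
  qed simp
  show "proots P \<in> halves circle_reflect (proots M)" if "P \<in> spectral_factors M" for P
    using that by (rule proots_spectral_factor)
  show "\<exists>P\<in>spectral_factors M. S = proots P" if S: "S \<in> halves circle_reflect (proots M)" for S
  proof -
    define F where "F = (\<Prod>x\<in>#S. [:- x, 1:])"
    have "S \<subseteq># proots M"
      using S mset_subset_eq_add_right[of S "image_mset circle_reflect S"] by (simp add: halves_def)
    moreover have "0 \<notin># proots M"
      using P0 by (simp add: M_def zero_not_in_proots coeff_0_reciprocal_poly_mult_self)
    ultimately have "0 \<notin># S"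
      by (meson mset_subset_eqD)
    have "F \<noteq> 0"
      by (auto simp: F_def prod_mset_zero_iff)
    have "proots F = S"
      by (simp add: F_def proots_prod_linear)
    then have "poly F 0 \<noteq> 0"
      using \<open>0 \<notin># S\<close> set_count_proots[OF \<open>F \<noteq> 0\<close>] by (metis mem_Collect_eq)
    then have F: "coeff F 0 \<noteq> 0" "proots F = S"
      using \<open>proots F = S\<close> by (simp_all add: poly_0_coeff_0)
    then obtain d where d: "smult d F \<in> spectral_factors M"
      using ex1_smult_spectral_factor[OF P0 F(1)] S by (auto simp: M_def)
    then have "d \<noteq> 0"
      using spectral_factors_coeff_0 by fastforce
    then have "proots (smult d F) = S"
      using F(2) by simp
    then show ?thesis
      using d by blast
  qed
qed

section \<open>Laurent polynomials of polynomial type\<close>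

text \<open>\<open>lshift m F\<close> is the Laurent polynomial \<open>z powi m * F z\<close>.\<close>

definition lshift :: "int \<Rightarrow> complex poly \<Rightarrow> laurent" where
  "lshift m F n = (if m \<le> n then coeff F (nat (n - m)) else 0)"

lemma poly_to_laurent_eq_lshift: "poly_to_laurent P = lshift 0 P"
  by (simp add: fun_eq_iff poly_to_laurent_def lshift_def)

lemma lsupp_lshift: "lsupp (lshift m F) \<subseteq> (\<lambda>i. m + int i) ` {..degree F}"
proof
  fix n assume "n \<in> lsupp (lshift m F)"
  then have "m \<le> n" "coeff F (nat (n - m)) \<noteq> 0"
    by (auto simp: lsupp_def lshift_def split: if_splits)
  then have "nat (n - m) \<in> {..degree F}" "n = m + int (nat (n - m))"
    by (auto intro: le_degree)
  then show "n \<in> (\<lambda>i. m + int i) ` {..degree F}"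
    by blast
qed

lemma is_laurent_lshift: "is_laurent (lshift m F)"
  unfolding is_laurent_def by (rule finite_subset[OF lsupp_lshift]) auto

lemma lmult_lshift_left: "lmult (lshift m F) g n = (\<Sum>i\<le>degree F. coeff F i * g (n - m - int i))"
proof -
  have "lmult (lshift m F) g n = (\<Sum>j\<in>(\<lambda>i. m + int i) ` {..degree F}. lshift m F j * g (n - j))"
    unfolding lmult_def using lsupp_lshift[of m F]
    by (intro sum.mono_neutral_left) (auto simp: lsupp_def)
  also have "\<dots> = (\<Sum>i\<le>degree F. coeff F i * g (n - m - int i))"
    by (subst sum.reindex) (auto simp: inj_on_def lshift_def algebra_simps)
  finally show ?thesis .
qed

lemma lmult_lshift: "lmult (lshift m F) (lshift k G) = lshift (m + k) (F * G)"
proof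
  fix n
  show "lmult (lshift m F) (lshift k G) n = lshift (m + k) (F * G) n"
  proof (cases "m + k \<le> n")
    case False
    then show ?thesis
      by (auto simp: lmult_lshift_left lshift_def intro!: sum.neutral)
  next
    case True
    define N where "N = nat (n - m - k)"
    define h where "h i = (if i \<le> N then coeff F i * coeff G (N - i) else 0)" for i
    have "coeff F i * lshift k G (n - m - int i) = h i" for i
    proof (cases "i \<le> N")
      case True
      then have "k \<le> n - m - int i" "nat (n - m - int i - k) = N - i"
        using \<open>m + k \<le> n\<close> unfolding N_def by linarith+
      then show ?thesis
        using True by (simp add: h_def lshift_def)
    next
      case False
      then have "\<not> k \<le> n - m - int i"
        unfolding N_def by linarith
      then show ?thesis
        using False by (simp add: h_def lshift_def)
    qed
    then have "lmult (lshift m F) (lshift k G) n = (\<Sum>i\<le>degree F. h i)"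
      by (simp add: lmult_lshift_left)
    also have "\<dots> = (\<Sum>i\<le>degree F + N. h i)"
      by (rule sum.mono_neutral_left) (auto simp: h_def coeff_eq_0)
    also have "\<dots> = (\<Sum>i\<le>N. h i)"
      by (rule sum.mono_neutral_right) (auto simp: h_def)
    also have "\<dots> = coeff (F * G) N"
      by (simp add: coeff_mult h_def)
    finally show ?thesis
      using True by (simp add: lshift_def N_def algebra_simps)
  qed
qed

lemma lstar_lstar [simp]: "lstar (lstar f) = f"
  by (simp add: lstar_def fun_eq_iff)

lemma lstar_eq_iff [simp]: "lstar f = lstar g \<longleftrightarrow> f = g"
  by (metis lstar_lstar)

lemma is_laurent_lstar: "is_laurent f \<Longrightarrow> is_laurent (lstar f)"
proof -
  assume "is_laurent f"
  moreover have "lsupp (lstar f) = uminus ` lsupp f"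
    by (force simp: lsupp_def lstar_def)
  ultimately show ?thesis
    by (simp add: is_laurent_def)
qed

lemma lstar_poly_to_laurent: "lstar (poly_to_laurent P) = lshift (- int (degree P)) (reciprocal_poly P)"
proof
  fix n
  show "lstar (poly_to_laurent P) n = lshift (- int (degree P)) (reciprocal_poly P) n"
  proof (cases "- int (degree P) \<le> n \<and> n \<le> 0")
    case True
    then have "nat (n + int (degree P)) = degree P - nat (- n)" "nat (- n) \<le> degree P"
      by linarith+
    with True show ?thesis
      by (simp add: lstar_def poly_to_laurent_def lshift_def coeff_reciprocal_poly)
  next
    case False
    then show ?thesis
      by (auto simp: lstar_def poly_to_laurent_def lshift_def reciprocal_poly_def
          coeff_reflect_poly coeff_eq_0)
  qed
qed

lemma lshift_eq_iff:
  assumes "coeff F 0 \<noteq> 0" "coeff G 0 \<noteq> 0"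
  shows "lshift m F = lshift k G \<longleftrightarrow> m = k \<and> F = G"
proof
  assume eq: "lshift m F = lshift k G"
  have "m = k"
  proof (rule ccontr)
    assume "m \<noteq> k"
    then have "lshift m F (min m k) \<noteq> lshift k G (min m k)"
      using assms by (auto simp: lshift_def min_def)
    then show False
      using eq by simp
  qed
  moreover have "coeff F i = coeff G i" for i
    using fun_cong[OF eq, of "m + int i"] \<open>m = k\<close> by (simp add: lshift_def)
  ultimately show "m = k \<and> F = G"
    by (simp add: poly_eqI)
qed simp

lemma poly_to_laurent_eq_iff [simp]: "poly_to_laurent P = poly_to_laurent Q \<longleftrightarrow> P = Q"
proof
  fix P Q assume eq: "poly_to_laurent P = poly_to_laurent Q"
  have "coeff P i = coeff Q i" for i
    using fun_cong[OF eq, of "int i"] by (simp add: poly_to_laurent_def)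
  then show "P = Q"
    by (rule poly_eqI)
qed simp

lemma Poly_map_coeff_upt_degree: "Poly (map (coeff F) [0..<Suc (degree F)]) = F"
proof (rule poly_eqI)
  fix i
  show "coeff (Poly (map (coeff F) [0..<Suc (degree F)])) i = coeff F i"
    by (cases "i \<le> degree F") (auto simp: nth_default_def coeff_eq_0 simp del: upt_Suc)
qed

lemma lpoly_lshift:
  assumes "coeff F 0 \<noteq> 0"
  shows "lpoly (lshift m F) = F"
proof -
  have fin: "finite (lsupp (lshift m F))"
    using is_laurent_lshift by (simp add: is_laurent_def)
  have m: "m \<in> lsupp (lshift m F)" and top: "m + int (degree F) \<in> lsupp (lshift m F)"
    using assms by (auto simp: lsupp_def lshift_def)
  have bounds: "m \<le> n \<and> n \<le> m + int (degree F)" if "n \<in> lsupp (lshift m F)" for n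
    using that lsupp_lshift[of m F] by auto
  have ldeg: "ldeg (lshift m F) = m"
    unfolding ldeg_def using fin m bounds by (intro Min_eqI) auto
  have hdeg: "hdeg (lshift m F) = m + int (degree F)"
    unfolding hdeg_def using fin top bounds by (intro Max_eqI) auto
  have "lpoly (lshift m F) = Poly (map (\<lambda>i. lshift m F (m + int i)) [0..<Suc (degree F)])"
    using m unfolding lpoly_def ldeg hdeg by auto
  also have "map (\<lambda>i. lshift m F (m + int i)) [0..<Suc (degree F)] = map (coeff F) [0..<Suc (degree F)]"
    by (simp add: lshift_def)
  finally show ?thesis
    by (simp only: Poly_map_coeff_upt_degree)
qed

lemma lzeros_lshift:
  assumes "coeff F 0 \<noteq> 0"
  shows "lzeros (lshift m F) = proots F"
proof -
  have "filter_mset (\<lambda>z. z \<noteq> 0) (proots F) = proots F"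
    using zero_not_in_proots[OF assms] by (subst filter_mset_eq_conv) auto
  then show ?thesis
    by (simp add: lzeros_def lpoly_lshift[OF assms])
qed

lemma lzeros_poly_to_laurent: "coeff P 0 \<noteq> 0 \<Longrightarrow> lzeros (poly_to_laurent P) = proots P"
  by (simp add: poly_to_laurent_eq_lshift lzeros_lshift)

lemma lzeros_lstar_poly_to_laurent:
  assumes "coeff P 0 \<noteq> 0"
  shows "lzeros (lstar (poly_to_laurent P)) = image_mset circle_reflect (proots P)"
proof -
  have "coeff (reciprocal_poly P) 0 \<noteq> 0"
    using assms by auto
  then show ?thesis
    using assms by (simp add: lstar_poly_to_laurent lzeros_lshift proots_reciprocal_poly)
qed

lemma lmult_lstar_poly_to_laurent_self:
  "lmult (lstar (poly_to_laurent P)) (poly_to_laurent P) = lshift (- int (degree P)) (reciprocal_poly P * P)"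
  unfolding lstar_poly_to_laurent
  unfolding poly_to_laurent_eq_lshift lmult_lshift by simp

lemma lsmult_lstar_poly_to_laurent:
  "lsmult c (lstar (poly_to_laurent P)) = lstar (poly_to_laurent (smult (cnj c) P))"
  by (simp add: fun_eq_iff lsmult_def lstar_def poly_to_laurent_def)

lemma laurent_eq_poly_to_laurent:
  assumes "is_laurent f" "\<forall>n<0. f n = 0"
  shows "f = poly_to_laurent (Abs_poly (\<lambda>i. f (int i)))"
proof -
  have fin: "finite (lsupp f)"
    using assms(1) by (simp add: is_laurent_def)
  have "f (int i) = 0" if "i > nat (Max (lsupp f))" for i
  proof (rule ccontr)
    assume "f (int i) \<noteq> 0"
    then have "int i \<le> Max (lsupp f)"
      using fin by (simp add: lsupp_def)
    then show False
      using that by linarith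
  qed
  then have coeff: "coeff (Abs_poly (\<lambda>i. f (int i))) = (\<lambda>i. f (int i))"
    by (rule coeff_Abs_poly)
  show ?thesis
  proof
    fix n
    show "f n = poly_to_laurent (Abs_poly (\<lambda>i. f (int i))) n"
      using assms(2) by (cases "0 \<le> n") (simp_all add: poly_to_laurent_def coeff)
  qed
qed

section \<open>The fibres of the second projection\<close>

lemma SS_iff:
  "(a, b) \<in> SS \<longleftrightarrow> is_laurent a \<and> is_laurent b \<and> val0_pos (lstar a) \<and>
     lmult a (lstar a) = lminus lone (lmult b (lstar b))"
  by (auto simp: SS_def fun_eq_iff lminus_def eq_diff_eq)

lemma SS_imp_lstar_poly_to_laurent:
  assumes "(a, b) \<in> SS"
  obtains P where "a = lstar (poly_to_laurent P)"
proof -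
  have "is_laurent (lstar a)" "\<forall>n<0. lstar a n = 0"
    using assms by (auto simp: SS_iff is_laurent_lstar val0_pos_def)
  then have "lstar a = poly_to_laurent (Abs_poly (\<lambda>i. lstar a (int i)))"
    by (rule laurent_eq_poly_to_laurent)
  then show thesis
    by (metis lstar_lstar that)
qed

lemma SS_lstar_poly_to_laurent_iff:
  "(lstar (poly_to_laurent P), b) \<in> SS \<longleftrightarrow>
     is_laurent b \<and> coeff P 0 \<in> \<real> \<and> 0 < Re (coeff P 0) \<and>
     lminus lone (lmult b (lstar b)) = lshift (- int (degree P)) (reciprocal_poly P * P)"
proof -
  have "is_laurent (lstar (poly_to_laurent P))"
    by (simp add: lstar_poly_to_laurent is_laurent_lshift)
  moreover have "val0_pos (poly_to_laurent P) \<longleftrightarrow> coeff P 0 \<in> \<real> \<and> 0 < Re (coeff P 0)"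
    by (simp add: val0_pos_def poly_to_laurent_def)
  ultimately show ?thesis
    by (auto simp: SS_iff lmult_lstar_poly_to_laurent_self)
qed

lemma SS_lstar_poly_to_laurent_coeff_0:
  "(lstar (poly_to_laurent P), b) \<in> SS \<Longrightarrow> coeff P 0 \<noteq> 0"
  by (auto simp: SS_lstar_poly_to_laurent_iff)

lemma SS_lstar_poly_to_laurent_spectral_factors_iff:
  assumes "(lstar (poly_to_laurent P0), b) \<in> SS"
  shows "(lstar (poly_to_laurent P), b) \<in> SS \<longleftrightarrow> P \<in> spectral_factors (reciprocal_poly P0 * P0)"
proof -
  have P0: "coeff P0 0 \<noteq> 0"
    and b: "is_laurent b" "lminus lone (lmult b (lstar b)) = lshift (- int (degree P0)) (reciprocal_poly P0 * P0)"
    using assms by (auto simp: SS_lstar_poly_to_laurent_iff)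
  have "lshift (- int (degree P0)) (reciprocal_poly P0 * P0) = lshift (- int (degree P)) (reciprocal_poly P * P)
      \<longleftrightarrow> reciprocal_poly P * P = reciprocal_poly P0 * P0" if P: "coeff P 0 \<noteq> 0"
  proof
    assume "lshift (- int (degree P0)) (reciprocal_poly P0 * P0) =
      lshift (- int (degree P)) (reciprocal_poly P * P)"
    then show "reciprocal_poly P * P = reciprocal_poly P0 * P0"
      using P P0 by (simp add: lshift_eq_iff coeff_0_reciprocal_poly_mult_self)
  next
    assume eq: "reciprocal_poly P * P = reciprocal_poly P0 * P0"
    then have "degree P = degree P0"
      using degree_reciprocal_poly_mult_self[OF P] degree_reciprocal_poly_mult_self[OF P0] by simp
    then show "lshift (- int (degree P0)) (reciprocal_poly P0 * P0) =
      lshift (- int (degree P)) (reciprocal_poly P * P)"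
      using eq by simp
  qed
  then show ?thesis
    unfolding SS_lstar_poly_to_laurent_iff spectral_factors_def mem_Collect_eq b(2)
    using b(1) by fastforce
qed

lemma BB_obtains_poly:
  assumes "b \<in> BB"
  obtains P0 where "(lstar (poly_to_laurent P0), b) \<in> SS"
proof -
  obtain a where a: "(a, b) \<in> SS"
    using assms by (auto simp: BB_def)
  then obtain P0 where "a = lstar (poly_to_laurent P0)"
    by (rule SS_imp_lstar_poly_to_laurent)
  with a show thesis
    using that by simp
qed

lemma lzeros_one_minus_lmult_lstar:
  assumes "(lstar (poly_to_laurent P0), b) \<in> SS"
  shows "lzeros (lminus lone (lmult b (lstar b))) = proots (reciprocal_poly P0 * P0)"
proof -
  have "coeff P0 0 \<noteq> 0"
    using assms by (rule SS_lstar_poly_to_laurent_coeff_0)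
  then show ?thesis
    using assms lzeros_lshift[OF coeff_0_reciprocal_poly_mult_self]
    by (simp add: SS_lstar_poly_to_laurent_iff)
qed

lemma fibre2_eq_image_spectral_factors:
  assumes "(lstar (poly_to_laurent P0), b) \<in> SS"
  shows "fibre2 b = (\<lambda>P. (lstar (poly_to_laurent P), b)) ` spectral_factors (reciprocal_poly P0 * P0)"
proof (intro set_eqI iffI)
  fix q assume "q \<in> fibre2 b"
  then have q: "q = (fst q, b)" "(fst q, b) \<in> SS"
    by (auto simp: fibre2_def)
  then obtain P where "fst q = lstar (poly_to_laurent P)"
    by (blast elim: SS_imp_lstar_poly_to_laurent)
  then show "q \<in> (\<lambda>P. (lstar (poly_to_laurent P), b)) ` spectral_factors (reciprocal_poly P0 * P0)"
    using q SS_lstar_poly_to_laurent_spectral_factors_iff[OF assms] by (metis image_eqI)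
next
  fix q assume "q \<in> (\<lambda>P. (lstar (poly_to_laurent P), b)) ` spectral_factors (reciprocal_poly P0 * P0)"
  then show "q \<in> fibre2 b"
    using SS_lstar_poly_to_laurent_spectral_factors_iff[OF assms] by (auto simp: fibre2_def)
qed

lemma fibre2_lstar_poly_to_laurent_iff:
  assumes "(lstar (poly_to_laurent P0), b) \<in> SS"
  shows "(lstar (poly_to_laurent P), b) \<in> fibre2 b \<longleftrightarrow> P \<in> spectral_factors (reciprocal_poly P0 * P0)"
  using SS_lstar_poly_to_laurent_spectral_factors_iff[OF assms] by (simp add: fibre2_def)

lemma finite_card_fibre2:
  assumes P0: "(lstar (poly_to_laurent P0), b) \<in> SS"
  defines "M \<equiv> reciprocal_poly P0 * P0"
  shows "finite (fibre2 b) \<and> card (fibre2 b) = NN (proots M)"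
proof -
  have "coeff P0 0 \<noteq> 0"
    using P0 by (rule SS_lstar_poly_to_laurent_coeff_0)
  then have "0 \<notin># proots M"
    unfolding M_def by (intro zero_not_in_proots coeff_0_reciprocal_poly_mult_self)
  moreover have "proots P0 \<in> halves circle_reflect (proots M)"
    unfolding M_def halves_def using proots_reciprocal_poly_mult_self[OF \<open>coeff P0 0 \<noteq> 0\<close>] by simp
  ultimately have "finite (halves circle_reflect (proots M)) \<and> card (halves circle_reflect (proots M)) = NN (proots M)"
    by (rule NN_eq_card_halves)
  moreover have "bij_betw proots (spectral_factors M) (halves circle_reflect (proots M))"
    unfolding M_def using \<open>coeff P0 0 \<noteq> 0\<close> by (rule bij_betw_proots_spectral_factors)
  moreover have "inj_on (\<lambda>P. (lstar (poly_to_laurent P), b)) (spectral_factors M)"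
    by (simp add: inj_on_def)
  ultimately show ?thesis
    unfolding fibre2_eq_image_spectral_factors[OF P0, folded M_def]
    by (simp add: card_image bij_betw_finite bij_betw_same_card)
qed

lemma fibre2_lzeros:
  assumes P0: "(lstar (poly_to_laurent P0), b) \<in> SS"
    and a: "(a, b) \<in> fibre2 b" and a': "(a', b) \<in> fibre2 b"
  shows "(a \<noteq> a' \<longleftrightarrow> lzeros (lstar a) \<noteq> lzeros (lstar a')) \<and>
    filter_mset (\<lambda>z. cmod z = 1) (lzeros a) = filter_mset (\<lambda>z. cmod z = 1) (lzeros a')"
proof -
  let ?M = "reciprocal_poly P0 * P0"
  obtain P P' where P: "P \<in> spectral_factors ?M" "a = lstar (poly_to_laurent P)"
    and P': "P' \<in> spectral_factors ?M" "a' = lstar (poly_to_laurent P')"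
    using a a' unfolding fibre2_eq_image_spectral_factors[OF P0] by auto
  have "coeff P 0 \<noteq> 0" "coeff P' 0 \<noteq> 0"
    using P(1) P'(1) by (simp_all add: spectral_factors_coeff_0)
  moreover have "inj_on proots (spectral_factors ?M)"
    using bij_betw_proots_spectral_factors[OF SS_lstar_poly_to_laurent_coeff_0[OF P0]]
    by (rule bij_betw_imp_inj_on)
  then have "a = a' \<longleftrightarrow> proots P = proots P'"
    using P P' by (auto dest: inj_onD)
  ultimately show ?thesis
    using P P' spectral_factors_filter_unit_circle_eq[OF P(1) P'(1)]
    by (simp add: lzeros_poly_to_laurent lzeros_lstar_poly_to_laurent filter_unit_circle_image_circle_reflect)
qed

lemma ex1_lsmult_fibre2:
  assumes P0: "(lstar (poly_to_laurent P0), b) \<in> SS" and p: "coeff p 0 \<noteq> 0"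
    and halves: "proots p \<in> halves circle_reflect (proots (reciprocal_poly P0 * P0))"
  shows "\<exists>!c. c \<noteq> 0 \<and> (lsmult c (lstar (poly_to_laurent p)), b) \<in> fibre2 b"
proof -
  let ?M = "reciprocal_poly P0 * P0"
  have mem: "(lsmult c (lstar (poly_to_laurent p)), b) \<in> fibre2 b \<longleftrightarrow> smult (cnj c) p \<in> spectral_factors ?M" for c
    by (simp add: lsmult_lstar_poly_to_laurent fibre2_lstar_poly_to_laurent_iff[OF P0])
  obtain d where d: "smult d p \<in> spectral_factors ?M" and unique: "\<And>d'. smult d' p \<in> spectral_factors ?M \<Longrightarrow> d' = d"
    using ex1_smult_spectral_factor[OF SS_lstar_poly_to_laurent_coeff_0[OF P0] p halves] by blast
  have "d \<noteq> 0"
    using spectral_factors_coeff_0[OF d] by auto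
  show ?thesis
  proof (rule ex1I[of _ "cnj d"])
    show "cnj d \<noteq> 0 \<and> (lsmult (cnj d) (lstar (poly_to_laurent p)), b) \<in> fibre2 b"
      using \<open>d \<noteq> 0\<close> d by (simp add: mem)
    show "c = cnj d" if "c \<noteq> 0 \<and> (lsmult c (lstar (poly_to_laurent p)), b) \<in> fibre2 b" for c
    proof -
      have "cnj c = d"
        using unique[of "cnj c"] that by (simp add: mem)
      then show ?thesis
        by auto
    qed
  qed
qed

theorem lemmaA2:
  fixes b :: laurent
  assumes hb: "b \<in> BB"
  defines "R \<equiv> lzeros (lminus lone (lmult b (lstar b)))"
  shows "(finite (fibre2 b) \<and> card (fibre2 b) = NN R) \<and>
         (\<forall>a a'. (a, b) \<in> fibre2 b \<longrightarrow> (a', b) \<in> fibre2 b \<longrightarrow>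
           (a \<noteq> a' \<longleftrightarrow> lzeros (lstar a) \<noteq> lzeros (lstar a')) \<and>
           filter_mset (\<lambda>z. cmod z = 1) (lzeros a) = filter_mset (\<lambda>z. cmod z = 1) (lzeros a')) \<and>
         (\<forall>p :: complex poly. poly p 0 \<noteq> 0 \<longrightarrow>
           ((lstar (poly_to_laurent p), b) \<in> fibre2 b \<longrightarrow>
              R = (\<Sum>\<alpha>\<in>#proots p. {#\<alpha>, 1 / cnj \<alpha>#})) \<and>
           (R = (\<Sum>\<alpha>\<in>#proots p. {#\<alpha>, 1 / cnj \<alpha>#}) \<longrightarrow>
              (\<exists>!c. c \<noteq> 0 \<and> (lsmult c (lstar (poly_to_laurent p)), b) \<in> fibre2 b)))"
proof -
  obtain P0 where P0: "(lstar (poly_to_laurent P0), b) \<in> SS"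
    using hb by (rule BB_obtains_poly)
  let ?M = "reciprocal_poly P0 * P0"
  have R: "R = proots ?M"
    unfolding R_def by (rule lzeros_one_minus_lmult_lstar[OF P0])
  have part_c: "((lstar (poly_to_laurent p), b) \<in> fibre2 b \<longrightarrow> R = (\<Sum>\<alpha>\<in>#proots p. {#\<alpha>, 1 / cnj \<alpha>#})) \<and>
      (R = (\<Sum>\<alpha>\<in>#proots p. {#\<alpha>, 1 / cnj \<alpha>#}) \<longrightarrow>
        (\<exists>!c. c \<noteq> 0 \<and> (lsmult c (lstar (poly_to_laurent p)), b) \<in> fibre2 b))"
    if "poly p 0 \<noteq> 0" for p
  proof -
    have p: "coeff p 0 \<noteq> 0"
      using that by (simp add: poly_0_coeff_0)
    have iff: "R = (\<Sum>\<alpha>\<in>#proots p. {#\<alpha>, 1 / cnj \<alpha>#}) \<longleftrightarrow> proots p \<in> halves circle_reflect (proots ?M)"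
      unfolding R halves_def sum_mset_reflection_pairs mem_Collect_eq by (rule eq_commute)
    show ?thesis
      using iff proots_spectral_factor[of p] ex1_lsmult_fibre2[OF P0 p]
      unfolding fibre2_lstar_poly_to_laurent_iff[OF P0] by blast
  qed
  show ?thesis
    using finite_card_fibre2[OF P0, folded R] fibre2_lzeros[OF P0] part_c by blast
qed

end
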